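(* Let $K>0$, $K\neq 1$, and let \[ A_6=\begin{pmatrix} K & K & 1\\ K & 1 & 1\\ 1 & 1 & 1\end{pmatrix}. \] Then $S(A_6)=XA_6X$ with $X=\operatorname{diag}(x,y,z)$, \[ y=\frac{1}{\sqrt{1+K^{1/3}+K^{2/3}}},\quad x=\frac{y}{K^{1/3}},\quad z=K^{1/3}y, \] and $S(A_6)$ is the circulant-type matrix \[ S(A_6)=\begin{pmatrix} a & b & c\\ b & c & a\\ c & a & b\end{pmatrix},\qquad a=\frac{K^{2/3}-K^{1/3}}{K-1},\quad b=\frac{K-K^{2/3}}{K-1},\quad c=\frac{K^{1/3}-1}{K-1}. \] Consequently, if $A_6^{(\ell)}=(a^{(\ell)}_{i,j})$ denotes the $\ell$th matrix of the alternate minimization sequence starting from $A_6$, then $\lim_{\ell\to\infty}\bigl((K-1)a^{(\ell)}_{1,3}+1\bigr)=K^{1/3}$, and similarly with $a^{(\ell)}_{2,2}$ or $a^{(\ell)}_{3,1}$ in place of $a^{(\ell)}_{1,3}$; for rational $K$ this gives sequences of rational numbers converging to $K^{1/3}$. Also $\lim_{K\to\infty}S(A_6)=\begin{pmatrix} 0&1&0\\1&0&0\\0&0&1\end{pmatrix}$.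
   Context: For a positive $n\times n$ matrix $A$, the Sinkhorn limit $S(A)$ is the unique doubly stochastic matrix of the form $XAY$ with $X,Y$ positive diagonal matrices; it is the limit of the alternate minimization sequence obtained from $A$ by alternately row scaling (dividing each row by its row sum) and column scaling (dividing each column by its column sum). For a positive symmetric matrix $A$ there is a unique positive diagonal $X$ with $S(A)=XAX$. *)

theory Defs
  imports "HOL-Analysis.Analysis"
begin

text \<open>n x n real matrices are represented as functions nat => nat => real,
  with 0-based indices i, j < n (entry (i+1, j+1) of the paper is M i j).\<close>

definition positive_matrix :: "nat \<Rightarrow> (nat \<Rightarrow> nat \<Rightarrow> real) \<Rightarrow> bool" where
  "positive_matrix n A \<longleftrightarrow> (\<forall>i<n. \<forall>j<n. A i j > 0)"

definition doubly_stochastic :: "nat \<Rightarrow> (nat \<Rightarrow> nat \<Rightarrow> real) \<Rightarrow> bool" where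
  "doubly_stochastic n M \<longleftrightarrow>
     (\<forall>i<n. \<forall>j<n. M i j \<ge> 0) \<and>
     (\<forall>i<n. (\<Sum>j<n. M i j) = 1) \<and>
     (\<forall>j<n. (\<Sum>i<n. M i j) = 1)"

text \<open>Entries outside the index range
  are normalised to 0 so that the matrix is uniquely determined.\<close>
definition sinkhorn :: "nat \<Rightarrow> (nat \<Rightarrow> nat \<Rightarrow> real) \<Rightarrow> (nat \<Rightarrow> nat \<Rightarrow> real)" where
  "sinkhorn n A = (THE M. doubly_stochastic n M \<and>
      (\<forall>i j. (n \<le> i \<or> n \<le> j) \<longrightarrow> M i j = 0) \<and>
      (\<exists>x y. (\<forall>i<n. x i > 0 \<and> y i > 0) \<and>
             (\<forall>i<n. \<forall>j<n. M i j = x i * A i j * y j)))"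

definition row_scale :: "nat \<Rightarrow> (nat \<Rightarrow> nat \<Rightarrow> real) \<Rightarrow> (nat \<Rightarrow> nat \<Rightarrow> real)" where
  "row_scale n M = (\<lambda>i j. M i j / (\<Sum>k<n. M i k))"

definition col_scale :: "nat \<Rightarrow> (nat \<Rightarrow> nat \<Rightarrow> real) \<Rightarrow> (nat \<Rightarrow> nat \<Rightarrow> real)" where
  "col_scale n M = (\<lambda>i j. M i j / (\<Sum>k<n. M k j))"

fun alt_min :: "nat \<Rightarrow> (nat \<Rightarrow> nat \<Rightarrow> real) \<Rightarrow> nat \<Rightarrow> (nat \<Rightarrow> nat \<Rightarrow> real)" where
  "alt_min n A 0 = A"
| "alt_min n A (Suc l) =
     (if even l then row_scale n (alt_min n A l) else col_scale n (alt_min n A l))"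

definition A6 :: "real \<Rightarrow> nat \<Rightarrow> nat \<Rightarrow> real" where
  "A6 K i j = (if i < 3 \<and> j < 3 then [[K, K, 1], [K, 1, 1], [1, 1, 1]] ! i ! j else 0)"

end

theory Submission
  imports Defs "HOL-Real_Asymp.Real_Asymp"
begin

(* Let A be symmetric and positive and let x > 0 satisfy x_i (A x)_i = 1, so that XAX is doubly
   stochastic. From the all-ones vector, the alternate minimization sequence has the form
   D_(l+1) A D_l (or its transpose), where the diagonals iterate v |-> 1 / (A v). If v lies in the
   band a x <= v <= b x, the image lies in a band whose ratio satisfies
   b'/a' - 1 <= kappa (b/a - 1), with kappa = (1 - theta^2) / (1 + theta^2) < 1 and
   theta = min A / max A; hence the sequence converges geometrically to XAX. The same contraction,
   applied to a fixed point of the twice iterated map, shows that XAX is the only doubly stochastic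
   matrix PAQ. For A6 the balanced vector is y (K^(-1/3), 1, K^(1/3)); everything else is algebra
   in t = K^(1/3), based on K - 1 = (t - 1)(1 + t + t^2). *)

lemma abs_mult_sub_le_band:
  fixes a b p q u w :: real
  assumes "0 < a" "0 < p" "0 < q"
    and "a * q \<le> w" "w \<le> b * q" "p / b \<le> u" "u \<le> p / a"
  shows "\<bar>u * w - p * q\<bar> \<le> p * q * (b / a - 1)"
proof -
  define r where "r = b / a"
  have "a * q \<le> b * q"
    using assms(4,5) by linarith
  then have "a \<le> b"
    using assms(3) by simp
  then have r: "1 \<le> r" "0 < r" and b: "0 < b"
    using assms(1) by (simp_all add: r_def)
  have "0 < p / b" "0 < a * q"
    using assms(1-3) b by simp_all
  then have u: "0 \<le> u" and w: "0 \<le> w"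
    using assms(4,6) by linarith+
  have "u * w \<le> (p / a) * (b * q)"
    by (rule mult_mono) (use assms w in auto)
  moreover have "(p / b) * (a * q) \<le> u * w"
    by (rule mult_mono) (use assms u in auto)
  ultimately have upper: "u * w \<le> p * q * r" and lower: "p * q / r \<le> u * w"
    using assms(1) b by (simp_all add: r_def field_simps)
  have "r * (2 - r) \<le> 1"
    using zero_le_power2[of "r - 1"] by (simp add: power2_eq_square algebra_simps)
  then have "2 - r \<le> 1 / r"
    using r by (simp add: le_divide_eq mult.commute)
  then have "p * q * (2 - r) \<le> p * q / r"
    using mult_left_mono[of "2 - r" "1 / r" "p * q"] assms(2,3) by simp
  then show ?thesis
    using upper lower by (simp add: r_def abs_le_iff algebra_simps)
qed

lemma doubly_stochastic_cong:
  assumes "\<And>i j. i < n \<Longrightarrow> j < n \<Longrightarrow> M i j = M' i j"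
  shows "doubly_stochastic n M \<longleftrightarrow> doubly_stochastic n M'"
proof -
  have "(\<Sum>j<n. M i j) = (\<Sum>j<n. M' i j)" "(\<Sum>j<n. M j i) = (\<Sum>j<n. M' j i)" if "i < n" for i
    using assms that by (auto intro: sum.cong)
  then show ?thesis
    using assms by (auto simp: doubly_stochastic_def)
qed

locale symmetric_scaling =
  fixes n :: nat and A :: "nat \<Rightarrow> nat \<Rightarrow> real" and x :: "nat \<Rightarrow> real"
  assumes n_pos: "0 < n"
    and symmetric: "\<And>i j. i < n \<Longrightarrow> j < n \<Longrightarrow> A i j = A j i"
    and entries_pos: "\<And>i j. i < n \<Longrightarrow> j < n \<Longrightarrow> 0 < A i j"
    and x_pos: "\<And>i. i < n \<Longrightarrow> 0 < x i"
    and x_balanced: "\<And>i. i < n \<Longrightarrow> x i * (\<Sum>k<n. A i k * x k) = 1"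
begin

definition matvec :: "(nat \<Rightarrow> real) \<Rightarrow> nat \<Rightarrow> real" where
  "matvec v i = (\<Sum>k<n. A i k * v k)"

definition scaling_step :: "(nat \<Rightarrow> real) \<Rightarrow> nat \<Rightarrow> real" where
  "scaling_step v = (\<lambda>i. 1 / matvec v i)"

definition entries :: "real set" where
  "entries = (\<lambda>(i, j). A i j) ` ({..<n} \<times> {..<n})"

definition spread :: real where
  "spread = Min entries / Max entries"

definition contraction :: real where
  "contraction = (1 - spread\<^sup>2) / (1 + spread\<^sup>2)"

definition in_band :: "real \<Rightarrow> real \<Rightarrow> (nat \<Rightarrow> real) \<Rightarrow> bool" where
  "in_band a b v \<longleftrightarrow> (\<forall>i<n. a * x i \<le> v i \<and> v i \<le> b * x i)"

lemma entries_finite: "finite entries" and entries_nonempty: "entries \<noteq> {}"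
  using n_pos by (auto simp: entries_def)

lemma entry_in_entries: "i < n \<Longrightarrow> j < n \<Longrightarrow> A i j \<in> entries"
  by (force simp: entries_def)

lemma Min_entries_pos: "0 < Min entries"
  using Min_in[OF entries_finite entries_nonempty] entries_pos by (auto simp: entries_def)

lemma Min_entries_le_Max: "Min entries \<le> Max entries"
  using entry_in_entries[OF n_pos n_pos] entries_finite by (meson Max_ge Min_le order_trans)

lemma spread_pos: "0 < spread" and spread_le_one: "spread \<le> 1"
  using Min_entries_pos Min_entries_le_Max by (simp_all add: spread_def)

lemma spread_mult_le:
  assumes "i < n" "j < n" "k < n"
  shows "spread * A j k \<le> A i k"
proof -
  have max_pos: "0 < Max entries"
    using Min_entries_pos Min_entries_le_Max by linarith
  have "spread * A j k \<le> spread * Max entries"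
    using spread_pos entry_in_entries[of j k] assms entries_finite
    by (intro mult_left_mono) auto
  also have "\<dots> = Min entries"
    using max_pos by (simp add: spread_def)
  also have "\<dots> \<le> A i k"
    using entry_in_entries[of i k] assms entries_finite by auto
  finally show ?thesis .
qed

lemma contraction_nonneg: "0 \<le> contraction" and contraction_less_one: "contraction < 1"
proof -
  obtain s where s: "s = spread\<^sup>2" "0 < s" "s \<le> 1"
    using spread_pos spread_le_one by (simp add: power_le_one)
  then show "0 \<le> contraction" "contraction < 1"
    unfolding contraction_def s(1)[symmetric] by (simp_all add: divide_less_eq)
qed

lemma matvec_x: "i < n \<Longrightarrow> matvec x i = 1 / x i"
  using x_balanced[of i] x_pos[of i] by (simp add: matvec_def field_simps)

lemma matvec_scale: "matvec (\<lambda>k. c * v k) i = c * matvec v i"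
  by (simp add: matvec_def sum_distrib_left mult_ac)

lemma matvec_diff: "matvec (\<lambda>k. u k - w k) i = matvec u i - matvec w i"
  by (simp add: matvec_def right_diff_distrib sum_subtractf)

lemma matvec_cong: "(\<And>k. k < n \<Longrightarrow> u k = w k) \<Longrightarrow> matvec u i = matvec w i"
  by (simp add: matvec_def)

lemma matvec_pos: "(\<And>k. k < n \<Longrightarrow> 0 < v k) \<Longrightarrow> i < n \<Longrightarrow> 0 < matvec v i"
  unfolding matvec_def using n_pos entries_pos by (intro sum_pos) auto

lemma matvec_nonneg: "(\<And>k. k < n \<Longrightarrow> 0 \<le> v k) \<Longrightarrow> i < n \<Longrightarrow> 0 \<le> matvec v i"
  unfolding matvec_def using entries_pos by (intro sum_nonneg) (simp add: less_imp_le)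

lemma matvec_mono:
  "(\<And>k. k < n \<Longrightarrow> u k \<le> w k) \<Longrightarrow> i < n \<Longrightarrow> matvec u i \<le> matvec w i"
  unfolding matvec_def using entries_pos by (intro sum_mono) (simp add: mult_left_mono less_imp_le)

lemma spread_mult_matvec_le:
  assumes "\<And>k. k < n \<Longrightarrow> 0 \<le> u k" "i < n" "j < n"
  shows "spread * matvec u j \<le> matvec u i"
  unfolding matvec_def sum_distrib_left
proof (rule sum_mono)
  fix k assume "k \<in> {..<n}"
  then show "spread * (A j k * u k) \<le> A i k * u k"
    using spread_mult_le[of i j k] assms by (simp add: mult.assoc[symmetric] mult_right_mono)
qed

lemma spread_mult_x_le: "i < n \<Longrightarrow> j < n \<Longrightarrow> spread * x j \<le> x i"
  using spread_mult_matvec_le[of x j i] x_pos matvec_x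
  by (simp add: less_imp_le field_simps)

lemma in_band_weighted_matvec:
  assumes "in_band a b v" "i < n"
  shows "a \<le> x i * matvec v i" "x i * matvec v i \<le> b"
proof -
  have "matvec (\<lambda>k. a * x k) i \<le> matvec v i" "matvec v i \<le> matvec (\<lambda>k. b * x k) i"
    using assms by (auto simp: in_band_def intro: matvec_mono)
  then show "a \<le> x i * matvec v i" "x i * matvec v i \<le> b"
    using x_pos[OF assms(2)] by (simp_all add: matvec_scale matvec_x[OF assms(2)] field_simps)
qed

lemma spread_sq_mult_weighted_matvec_le:
  assumes "\<And>k. k < n \<Longrightarrow> 0 \<le> u k" "i < n" "j < n"
  shows "spread\<^sup>2 * (x j * matvec u j) \<le> x i * matvec u i"
proof -
  have "(spread * x j) * (spread * matvec u j) \<le> x i * matvec u i"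
    using assms spread_pos x_pos[OF assms(2)] x_pos[OF assms(3)] matvec_nonneg[of u j]
    by (intro mult_mono spread_mult_x_le spread_mult_matvec_le) auto
  then show ?thesis
    by (simp add: power2_eq_square mult_ac)
qed

lemma weighted_matvec_oscillation:
  assumes "in_band a b v" "i < n" "j < n"
  shows "(1 + spread\<^sup>2) * (x i * matvec v i - x j * matvec v j) \<le> (1 - spread\<^sup>2) * (b - a)"
proof -
  define p where "p k = x k * matvec v k" for k
  have lower: "x k * matvec (\<lambda>k. v k - a * x k) k = p k - a"
   and upper: "x k * matvec (\<lambda>k. b * x k - v k) k = b - p k" if "k < n" for k
    using x_pos[OF that] by (simp_all add: p_def matvec_diff matvec_scale matvec_x[OF that] field_simps)
  have "spread\<^sup>2 * (p i - a) \<le> p j - a"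
    using spread_sq_mult_weighted_matvec_le[of "\<lambda>k. v k - a * x k" j i] assms
    by (simp add: lower in_band_def)
  moreover have "spread\<^sup>2 * (b - p j) \<le> b - p i"
    using spread_sq_mult_weighted_matvec_le[of "\<lambda>k. b * x k - v k" i j] assms
    by (simp add: upper in_band_def)
  ultimately show ?thesis
    by (simp add: p_def algebra_simps)
qed

lemma scaling_step_eq: "i < n \<Longrightarrow> scaling_step v i = x i / (x i * matvec v i)"
  using x_pos[of i] by (simp add: scaling_step_def)

lemma scaling_step_bounds:
  assumes "in_band a b v" "0 < a" "i < n"
  shows "x i / b \<le> scaling_step v i" "scaling_step v i \<le> x i / a"
proof -
  have p: "a \<le> x i * matvec v i" "x i * matvec v i \<le> b"
    using in_band_weighted_matvec[OF assms(1,3)] by auto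
  show "x i / b \<le> scaling_step v i" "scaling_step v i \<le> x i / a"
    unfolding scaling_step_eq[OF assms(3)] using p assms(2) x_pos[OF assms(3)]
    by (intro divide_left_mono; simp)+
qed

lemma scaling_step_in_band:
  assumes "in_band a b v" "0 < a"
  obtains a' b' where "0 < a'" "in_band a' b' (scaling_step v)"
    "b' / a' - 1 \<le> contraction * (b / a - 1)"
proof -
  define p where "p k = x k * matvec v k" for k
  define P where "P = Max (p ` {..<n})"
  define m where "m = Min (p ` {..<n})"
  have ne: "p ` {..<n} \<noteq> {}" using n_pos by auto
  obtain iP where iP: "iP < n" "P = p iP" using Max_in[OF _ ne] by (auto simp: P_def)
  obtain im where im: "im < n" "m = p im" using Min_in[OF _ ne] by (auto simp: m_def)
  have p_range: "m \<le> p i" "p i \<le> P" if "i < n" for i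
    using that by (auto simp: P_def m_def)
  have band: "a \<le> p i" "p i \<le> b" if "i < n" for i
    using in_band_weighted_matvec[OF assms(1) that] by (simp_all add: p_def)
  have m_pos: "0 < m" and a_le_m: "a \<le> m" and a_le_b: "a \<le> b"
    using band[OF im(1)] im assms(2) by auto
  have "(1 + spread\<^sup>2) * (P - m) \<le> (1 - spread\<^sup>2) * (b - a)"
    using weighted_matvec_oscillation[OF assms(1) iP(1) im(1)] by (simp add: iP(2) im(2) p_def)
  then have osc: "P - m \<le> contraction * (b - a)"
    by (simp add: contraction_def pos_le_divide_eq add_pos_nonneg mult.commute)
  have "P / m - 1 = (P - m) / m"
    using m_pos by (simp add: field_simps)
  also have "\<dots> \<le> contraction * (b - a) / m"
    using osc m_pos by (simp add: divide_right_mono)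
  also have "\<dots> \<le> contraction * (b - a) / a"
    using contraction_nonneg a_le_b assms(2) a_le_m by (intro divide_left_mono) auto
  also have "\<dots> = contraction * (b / a - 1)"
    using assms(2) by (simp add: field_simps)
  finally have ratio: "P / m - 1 \<le> contraction * (b / a - 1)" .
  show thesis
  proof (rule that[of "1 / P" "1 / m"])
    show "0 < 1 / P" using m_pos p_range(2)[OF im(1)] im by simp
    show "(1 / m) / (1 / P) - 1 \<le> contraction * (b / a - 1)"
      using ratio m_pos by simp
    have "x i / P \<le> scaling_step v i \<and> scaling_step v i \<le> x i / m" if "i < n" for i
      unfolding scaling_step_eq[OF that] p_def[symmetric]
      using p_range[OF that] m_pos x_pos[OF that] by (auto intro!: divide_left_mono)
    then show "in_band (1 / P) (1 / m) (scaling_step v)"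
      by (simp add: in_band_def)
  qed
qed

lemma tight_band:
  assumes "\<And>k. k < n \<Longrightarrow> 0 < v k"
  obtains a b where "0 < a" "in_band a b v" "\<forall>a' b'. in_band a' b' v \<longrightarrow> a' \<le> a \<and> b \<le> b'"
proof -
  define r where "r k = v k / x k" for k
  have ne: "r ` {..<n} \<noteq> {}" using n_pos by auto
  obtain ia where ia: "ia < n" "Min (r ` {..<n}) = r ia" using Min_in[OF _ ne] by auto
  obtain ib where ib: "ib < n" "Max (r ` {..<n}) = r ib" using Max_in[OF _ ne] by auto
  have r_range: "r ia \<le> r k" "r k \<le> r ib" if "k < n" for k
    using that by (simp_all flip: ia(2) ib(2))
  show thesis
  proof (rule that[of "r ia" "r ib"])
    show "0 < r ia" using assms[OF ia(1)] x_pos[OF ia(1)] by (simp add: r_def)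
    have "r ia * x k \<le> v k \<and> v k \<le> r ib * x k" if "k < n" for k
      using r_range[OF that] x_pos[OF that] by (simp add: r_def pos_divide_le_eq pos_le_divide_eq)
    then show "in_band (r ia) (r ib) v"
      by (simp add: in_band_def)
    show "\<forall>a' b'. in_band a' b' v \<longrightarrow> a' \<le> r ia \<and> r ib \<le> b'"
    proof (intro allI impI)
      fix a' b' assume "in_band a' b' v"
      then show "a' \<le> r ia \<and> r ib \<le> b'"
        using ia(1) ib(1) x_pos[OF ia(1)] x_pos[OF ib(1)]
        by (simp add: in_band_def r_def pos_divide_le_eq pos_le_divide_eq)
    qed
  qed
qed

definition scaling_seq :: "nat \<Rightarrow> nat \<Rightarrow> real" where
  "scaling_seq l = (scaling_step ^^ l) (\<lambda>_. 1)"

lemma scaling_seq_0: "scaling_seq 0 = (\<lambda>_. 1)"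
  and scaling_seq_Suc: "scaling_seq (Suc l) = scaling_step (scaling_seq l)"
  by (simp_all add: scaling_seq_def)

lemma scaling_seq_pos: "i < n \<Longrightarrow> 0 < scaling_seq l i"
proof (induction l arbitrary: i)
  case 0
  then show ?case by (simp add: scaling_seq_0)
next
  case (Suc l)
  then show ?case
    using matvec_pos[of "scaling_seq l" i] by (simp add: scaling_seq_Suc scaling_step_def)
qed

lemma scaling_seq_in_band:
  obtains C where "\<And>l. \<exists>a b. 0 < a \<and> in_band a b (scaling_seq l) \<and> b / a - 1 \<le> C * contraction ^ l"
proof -
  obtain a0 b0 where a0: "0 < a0" and b0: "in_band a0 b0 (scaling_seq 0)"
    by (rule tight_band[of "scaling_seq 0"]) (auto intro: scaling_seq_pos)
  have "\<exists>a b. 0 < a \<and> in_band a b (scaling_seq l) \<and> b / a - 1 \<le> (b0 / a0 - 1) * contraction ^ l" for l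
  proof (induction l)
    case 0
    show ?case using a0 b0 by (intro exI[of _ a0] exI[of _ b0]) simp
  next
    case (Suc l)
    then obtain a b where ab: "0 < a" "in_band a b (scaling_seq l)"
      "b / a - 1 \<le> (b0 / a0 - 1) * contraction ^ l" by blast
    obtain a' b' where "0 < a'" "in_band a' b' (scaling_seq (Suc l))"
      "b' / a' - 1 \<le> contraction * (b / a - 1)"
      using scaling_step_in_band[OF ab(2,1)] by (auto simp: scaling_seq_Suc)
    moreover have "contraction * (b / a - 1) \<le> (b0 / a0 - 1) * contraction ^ Suc l"
      using mult_left_mono[OF ab(3) contraction_nonneg] by (simp add: mult_ac)
    ultimately show ?case by (meson order_trans)
  qed
  then show thesis by (rule that)
qed

lemma row_scale_diagonal_scaling:
  assumes "\<And>i j. i < n \<Longrightarrow> j < n \<Longrightarrow> M i j = u i * A i j * w j"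
    and "\<And>k. k < n \<Longrightarrow> 0 < u k" and "i < n" and "j < n"
  shows "row_scale n M i j = scaling_step w i * A i j * w j"
proof -
  have "(\<Sum>k<n. M i k) = u i * matvec w i"
    using assms(1,3) by (simp add: matvec_def sum_distrib_left mult_ac)
  then show ?thesis
    using assms(1,3,4) assms(2)[OF assms(3)] by (simp add: row_scale_def scaling_step_def)
qed

lemma col_scale_diagonal_scaling:
  assumes "\<And>i j. i < n \<Longrightarrow> j < n \<Longrightarrow> M i j = u i * A i j * w j"
    and "\<And>k. k < n \<Longrightarrow> 0 < w k" and "i < n" and "j < n"
  shows "col_scale n M i j = u i * A i j * scaling_step u j"
proof -
  have "(\<Sum>k<n. M k j) = w j * matvec u j"
    using assms(1,4) symmetric[OF _ assms(4)] by (simp add: matvec_def sum_distrib_left mult_ac)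
  then show ?thesis
    using assms(1,3,4) assms(2)[OF assms(4)] by (simp add: col_scale_def scaling_step_def)
qed

lemma alt_min_Suc_eq:
  assumes "i < n" "j < n"
  shows "alt_min n A (Suc l) i j =
    (if even l then scaling_seq (Suc l) i * A i j * scaling_seq l j
     else scaling_seq l i * A i j * scaling_seq (Suc l) j)"
  using assms
proof (induction l arbitrary: i j)
  case 0
  show ?case
    using row_scale_diagonal_scaling[of A "\<lambda>_. 1" "\<lambda>_. 1"] 0
    by (simp add: scaling_seq_Suc scaling_seq_0)
next
  case (Suc l)
  show ?case
  proof (cases "even l")
    case True
    have "\<And>i j. i < n \<Longrightarrow> j < n \<Longrightarrow>
        alt_min n A (Suc l) i j = scaling_seq (Suc l) i * A i j * scaling_seq l j"
      using Suc.IH True by simp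
    then have "col_scale n (alt_min n A (Suc l)) i j =
        scaling_seq (Suc l) i * A i j * scaling_step (scaling_seq (Suc l)) j"
      by (rule col_scale_diagonal_scaling) (use scaling_seq_pos Suc.prems in auto)
    then show ?thesis
      using True by (simp add: scaling_seq_Suc[of "Suc l"])
  next
    case False
    have "\<And>i j. i < n \<Longrightarrow> j < n \<Longrightarrow>
        alt_min n A (Suc l) i j = scaling_seq l i * A i j * scaling_seq (Suc l) j"
      using Suc.IH False by simp
    then have "row_scale n (alt_min n A (Suc l)) i j =
        scaling_step (scaling_seq (Suc l)) i * A i j * scaling_seq (Suc l) j"
      by (rule row_scale_diagonal_scaling) (use scaling_seq_pos Suc.prems in auto)
    then show ?thesis
      using False by (simp add: scaling_seq_Suc[of "Suc l"])
  qed
qed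

lemma alt_min_Suc_close:
  assumes "in_band a b (scaling_seq l)" "0 < a" "i < n" "j < n"
  shows "\<bar>alt_min n A (Suc l) i j - x i * A i j * x j\<bar> \<le> x i * A i j * x j * (b / a - 1)"
proof -
  have close: "\<bar>scaling_seq (Suc l) k * scaling_seq l k' - x k * x k'\<bar> \<le> x k * x k' * (b / a - 1)"
    if "k < n" "k' < n" for k k'
  proof (rule abs_mult_sub_le_band[OF assms(2) x_pos[OF that(1)] x_pos[OF that(2)]])
    show "a * x k' \<le> scaling_seq l k'" "scaling_seq l k' \<le> b * x k'"
      using assms(1) that(2) by (simp_all add: in_band_def)
    show "x k / b \<le> scaling_seq (Suc l) k" "scaling_seq (Suc l) k \<le> x k / a"
      using scaling_step_bounds[OF assms(1,2) that(1)] by (simp_all add: scaling_seq_Suc)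
  qed
  show ?thesis
  proof (cases "even l")
    case True
    then have "alt_min n A (Suc l) i j - x i * A i j * x j =
        A i j * (scaling_seq (Suc l) i * scaling_seq l j - x i * x j)"
      unfolding alt_min_Suc_eq[OF assms(3,4)] by (simp add: algebra_simps)
    then show ?thesis
      using close[OF assms(3,4)] entries_pos[OF assms(3,4)]
      by (simp add: abs_mult mult_left_mono mult_ac)
  next
    case False
    then have "alt_min n A (Suc l) i j - x i * A i j * x j =
        A i j * (scaling_seq (Suc l) j * scaling_seq l i - x j * x i)"
      unfolding alt_min_Suc_eq[OF assms(3,4)] by (simp add: algebra_simps)
    then show ?thesis
      using close[OF assms(4,3)] entries_pos[OF assms(3,4)]
      by (simp add: abs_mult mult_left_mono mult_ac)
  qed
qed

lemma alt_min_tendsto: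
  assumes "i < n" "j < n"
  shows "(\<lambda>l. alt_min n A l i j) \<longlonglongrightarrow> x i * A i j * x j"
proof -
  obtain C where C: "\<And>l. \<exists>a b. 0 < a \<and> in_band a b (scaling_seq l) \<and> b / a - 1 \<le> C * contraction ^ l"
    using scaling_seq_in_band by blast
  define s where "s = x i * A i j * x j"
  have "0 \<le> s"
    using assms x_pos entries_pos by (simp add: s_def less_imp_le)
  have bound: "norm (alt_min n A (Suc l) i j - s) \<le> s * C * contraction ^ l" for l
  proof -
    obtain a b where ab: "0 < a" "in_band a b (scaling_seq l)" "b / a - 1 \<le> C * contraction ^ l"
      using C by blast
    have "\<bar>alt_min n A (Suc l) i j - s\<bar> \<le> s * (b / a - 1)"
      unfolding s_def using ab(2,1) assms by (rule alt_min_Suc_close)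
    also have "\<dots> \<le> s * C * contraction ^ l"
      using mult_left_mono[OF ab(3) \<open>0 \<le> s\<close>] by (simp add: mult.assoc)
    finally show ?thesis
      by simp
  qed
  have "(\<lambda>l. s * C * contraction ^ l) \<longlonglongrightarrow> 0"
    using contraction_nonneg contraction_less_one
    by (intro tendsto_mult_right_zero LIMSEQ_power_zero) auto
  then have "(\<lambda>l. alt_min n A (Suc l) i j - s) \<longlonglongrightarrow> 0"
    by (rule Lim_null_comparison[OF always_eventually, rotated]) (use bound in blast)
  then have "(\<lambda>l. alt_min n A (Suc l) i j) \<longlonglongrightarrow> s"
    by (rule LIM_zero_cancel)
  then show ?thesis
    unfolding s_def by (rule LIMSEQ_imp_Suc)
qed

lemma scaling_step_twice_fixpoint:
  assumes "\<And>k. k < n \<Longrightarrow> 0 < q k"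
    and "\<And>k. k < n \<Longrightarrow> scaling_step (scaling_step q) k = q k"
  obtains c where "0 < c" "\<forall>k<n. q k = c * x k"
proof -
  obtain a b where ab: "0 < a" "in_band a b q"
    and tight: "\<forall>a' b'. in_band a' b' q \<longrightarrow> a' \<le> a \<and> b \<le> b'"
    by (rule tight_band[of q]) (auto intro: assms(1))
  obtain a' b' where a'b': "0 < a'" "in_band a' b' (scaling_step q)"
    "b' / a' - 1 \<le> contraction * (b / a - 1)"
    using scaling_step_in_band[OF ab(2,1)] by blast
  obtain a'' b'' where a''b'': "0 < a''" "in_band a'' b'' (scaling_step (scaling_step q))"
    "b'' / a'' - 1 \<le> contraction * (b' / a' - 1)"
    using scaling_step_in_band[OF a'b'(2,1)] by blast
  have "in_band a'' b'' q"
    using a''b''(2) assms(2) by (simp add: in_band_def)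
  then have a'': "a'' \<le> a" and b'': "b \<le> b''"
    using tight by auto
  have "a * x 0 \<le> b * x 0"
    using ab(2) n_pos by (force simp: in_band_def)
  then have a_le_b: "a \<le> b"
    using x_pos[OF n_pos] by simp
  have "b / a - 1 \<le> b'' / a'' - 1"
    using a'' b'' a''b''(1) ab(1) a_le_b by (simp add: frac_le)
  also have "\<dots> \<le> contraction * (b' / a' - 1)"
    by (rule a''b''(3))
  also have "\<dots> \<le> contraction * (contraction * (b / a - 1))"
    using a'b'(3) contraction_nonneg by (rule mult_left_mono)
  finally have "(1 - contraction\<^sup>2) * (b / a - 1) \<le> 0"
    by (simp add: power2_eq_square algebra_simps)
  moreover have "0 < 1 - contraction\<^sup>2"
    using contraction_nonneg contraction_less_one by (simp add: power_less_one_iff abs_square_less_1)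
  ultimately have "b \<le> a"
    using ab(1) by (simp add: mult_le_0_iff)
  have "q k = a * x k" if "k < n" for k
  proof -
    have "b * x k \<le> a * x k"
      using \<open>b \<le> a\<close> x_pos[OF that] by (simp add: mult_right_mono)
    then show ?thesis
      using ab(2) that by (force simp: in_band_def)
  qed
  then show thesis
    using that ab(1) by blast
qed

lemma doubly_stochastic_x: "doubly_stochastic n (\<lambda>i j. x i * A i j * x j)"
proof -
  have "(\<Sum>j<n. x i * A i j * x j) = 1" "(\<Sum>j<n. x j * A j i * x i) = 1" if "i < n" for i
    using x_balanced[OF that] symmetric[OF _ that]
    by (simp_all add: sum_distrib_left sum_distrib_right mult_ac)
  then show ?thesis
    using x_pos entries_pos by (simp add: doubly_stochastic_def less_imp_le)
qed

lemma doubly_stochastic_scaling_unique: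
  assumes pq: "\<And>k. k < n \<Longrightarrow> 0 < p k \<and> 0 < q k"
    and ds: "doubly_stochastic n (\<lambda>i j. p i * A i j * q j)" and "i < n" "j < n"
  shows "p i * A i j * q j = x i * A i j * x j"
proof -
  have p_eq: "p k = scaling_step q k" if "k < n" for k
  proof -
    have "p k * matvec q k = 1"
      using ds that by (simp add: doubly_stochastic_def matvec_def sum_distrib_left mult_ac)
    then show ?thesis
      by (auto simp: scaling_step_def eq_divide_eq)
  qed
  have q_eq: "q k = scaling_step p k" if "k < n" for k
  proof -
    have "(\<Sum>i<n. p i * A i k * q k) = q k * matvec p k"
      using symmetric[OF _ that] by (simp add: matvec_def sum_distrib_left mult_ac)
    then have "q k * matvec p k = 1"
      using ds that by (simp add: doubly_stochastic_def)
    then show ?thesis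
      by (auto simp: scaling_step_def eq_divide_eq)
  qed
  have fixpoint: "scaling_step (scaling_step q) k = q k" if "k < n" for k
    using matvec_cong[of "scaling_step q" p k] p_eq q_eq[OF that] by (simp add: scaling_step_def)
  obtain c where c: "0 < c" "\<forall>k<n. q k = c * x k"
    by (rule scaling_step_twice_fixpoint[of q]) (use pq fixpoint in auto)
  have "p k = x k / c" if "k < n" for k
  proof -
    have "matvec q k = c * matvec x k"
      using matvec_cong[of q "\<lambda>k. c * x k" k] c(2) by (simp add: matvec_scale)
    then show ?thesis
      using p_eq[OF that] by (simp add: scaling_step_def matvec_x[OF that])
  qed
  moreover have "q j = c * x j"
    using c(2) assms(4) by blast
  ultimately show ?thesis
    using c(1) assms(3) by simp
qed

lemma sinkhorn_eq: "sinkhorn n A = (\<lambda>i j. if i < n \<and> j < n then x i * A i j * x j else 0)"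
  (is "_ = ?S")
  unfolding sinkhorn_def
proof (rule the_equality)
  show "doubly_stochastic n ?S \<and> (\<forall>i j. n \<le> i \<or> n \<le> j \<longrightarrow> ?S i j = 0) \<and>
      (\<exists>u v. (\<forall>i<n. 0 < u i \<and> 0 < v i) \<and> (\<forall>i<n. \<forall>j<n. ?S i j = u i * A i j * v j))"
  proof (intro conjI exI[of _ x])
    show "doubly_stochastic n ?S"
      using doubly_stochastic_x doubly_stochastic_cong[of n ?S "\<lambda>i j. x i * A i j * x j"] by simp
  qed (use x_pos in auto)
next
  fix M
  assume "doubly_stochastic n M \<and> (\<forall>i j. n \<le> i \<or> n \<le> j \<longrightarrow> M i j = 0) \<and>
      (\<exists>u v. (\<forall>i<n. 0 < u i \<and> 0 < v i) \<and> (\<forall>i<n. \<forall>j<n. M i j = u i * A i j * v j))"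
  then have ds: "doubly_stochastic n M" and outside: "\<forall>i j. n \<le> i \<or> n \<le> j \<longrightarrow> M i j = 0"
    and "\<exists>u v. (\<forall>i<n. 0 < u i \<and> 0 < v i) \<and> (\<forall>i<n. \<forall>j<n. M i j = u i * A i j * v j)"
    by blast+
  then obtain p q where pq: "\<forall>i<n. 0 < p i \<and> 0 < q i" and M: "\<forall>i<n. \<forall>j<n. M i j = p i * A i j * q j"
    by blast
  have "doubly_stochastic n (\<lambda>i j. p i * A i j * q j)"
    using ds doubly_stochastic_cong[of n M "\<lambda>i j. p i * A i j * q j"] M by simp
  then have inside: "M i j = x i * A i j * x j" if "i < n" "j < n" for i j
    using doubly_stochastic_scaling_unique[of p q i j] pq M that by simp
  show "M = ?S"
  proof (intro ext)
    fix i j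
    show "M i j = ?S i j"
      using inside[of i j] outside by (cases "i < n \<and> j < n") auto
  qed
qed

lemma alt_min_tendsto_sinkhorn:
  assumes "i < n" "j < n"
  shows "(\<lambda>l. alt_min n A l i j) \<longlonglongrightarrow> sinkhorn n A i j"
  using alt_min_tendsto[OF assms] assms by (simp add: sinkhorn_eq)

end

lemma alt_min_Rats:
  assumes "\<And>i j. A i j \<in> \<rat>"
  shows "alt_min n A l i j \<in> \<rat>"
proof (induction l arbitrary: i j)
  case 0
  show ?case using assms by simp
next
  case (Suc l)
  then show ?case
    by (auto simp: row_scale_def col_scale_def intro!: Rats_divide Rats_sum)
qed

lemma sum_lessThan_3: "(\<Sum>k<3. f k) = f 0 + f 1 + f (2::nat)"
  by (simp add: eval_nat_numeral)

lemma A6_Rats: "K \<in> \<rat> \<Longrightarrow> A6 K i j \<in> \<rat>"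
  by (auto simp: A6_def less_Suc_eq numeral_3_eq_3)

lemma cube_root_facts:
  fixes K :: real
  assumes "0 < K"
  defines "t \<equiv> K powr (1/3)"
  shows "0 < t" "t ^ 3 = K" "K powr (2/3) = t\<^sup>2"
  using assms by (simp_all add: t_def powr_power)

lemma cube_root_quotients:
  fixes K :: real
  assumes "0 < K" "K \<noteq> 1"
  defines "t \<equiv> K powr (1/3)"
  shows "(K powr (2/3) - t) / (K - 1) = t / (1 + t + t\<^sup>2)"
    and "(K - K powr (2/3)) / (K - 1) = t\<^sup>2 / (1 + t + t\<^sup>2)"
    and "(t - 1) / (K - 1) = 1 / (1 + t + t\<^sup>2)"
proof -
  have t: "0 < t" "t ^ 3 = K" "K powr (2/3) = t\<^sup>2"
    using cube_root_facts[OF assms(1)] by (simp_all add: t_def)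
  have factor: "K - 1 = (t - 1) * (1 + t + t\<^sup>2)"
    unfolding t(2)[symmetric] by (simp add: algebra_simps power2_eq_square power3_eq_cube)
  have "t - 1 \<noteq> 0"
    using assms(2) t(2) by auto
  moreover have "t\<^sup>2 - t = (t - 1) * t" "K - t\<^sup>2 = (t - 1) * t\<^sup>2"
    unfolding t(2)[symmetric] by (simp_all add: algebra_simps power2_eq_square power3_eq_cube)
  ultimately show "(K powr (2/3) - t) / (K - 1) = t / (1 + t + t\<^sup>2)"
    and "(K - K powr (2/3)) / (K - 1) = t\<^sup>2 / (1 + t + t\<^sup>2)"
    and "(t - 1) / (K - 1) = 1 / (1 + t + t\<^sup>2)"
    unfolding t(3) by (simp_all add: factor)
qed

lemma A6_symmetric_scaling:
  assumes "0 < K"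
  defines "y \<equiv> 1 / sqrt (1 + K powr (1/3) + K powr (2/3))"
  shows "symmetric_scaling 3 (A6 K) (\<lambda>i. [y / K powr (1/3), y, K powr (1/3) * y] ! i)"
proof -
  define t where "t = K powr (1/3)"
  have t: "0 < t" "t ^ 3 = K" "K powr (2/3) = t\<^sup>2"
    using cube_root_facts[OF assms(1)] by (simp_all add: t_def)
  have s: "0 < 1 + t + t\<^sup>2"
    using t(1) by (simp add: add_pos_nonneg)
  have y: "0 < y" "y * y * (1 + t + t\<^sup>2) = 1"
    using s by (simp_all add: y_def t_def[symmetric] t(3) field_simps flip: power2_eq_square)
  show ?thesis
  proof
    fix i j :: nat
    assume "i < 3" "j < 3"
    then show "A6 K i j = A6 K j i" "0 < A6 K i j"
      using assms(1) by (auto simp: A6_def less_Suc_eq numeral_3_eq_3)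
  next
    fix i :: nat
    assume "i < 3"
    then have i: "i = 0 \<or> i = 1 \<or> i = 2"
      by auto
    then show "0 < [y / K powr (1/3), y, K powr (1/3) * y] ! i"
      using t(1) y(1) by (auto simp flip: t_def)
    have "[y / t, y, t * y] ! i * (\<Sum>k<3. A6 K i k * [y / t, y, t * y] ! k) = y * y * (1 + t + t\<^sup>2)"
      using i t(1) unfolding sum_lessThan_3
      by (auto simp: A6_def field_simps power2_eq_square power3_eq_cube simp flip: t(2))
    then show "[y / K powr (1/3), y, K powr (1/3) * y] ! i *
        (\<Sum>k<3. A6 K i k * [y / K powr (1/3), y, K powr (1/3) * y] ! k) = 1"
      using y(2) by (simp flip: t_def)
  qed simp
qed

lemma sinkhorn_A6:
  assumes "0 < K" "i < 3" "j < 3"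
  defines "t \<equiv> K powr (1/3)"
  shows "sinkhorn 3 (A6 K) i j = [[t, t\<^sup>2, 1], [t\<^sup>2, 1, t], [1, t, t\<^sup>2]] ! i ! j / (1 + t + t\<^sup>2)"
proof -
  define y where "y = 1 / sqrt (1 + K powr (1/3) + K powr (2/3))"
  interpret symmetric_scaling 3 "A6 K" "\<lambda>i. [y / K powr (1/3), y, K powr (1/3) * y] ! i"
    unfolding y_def by (rule A6_symmetric_scaling[OF assms(1)])
  have t: "0 < t" "t ^ 3 = K" "K powr (2/3) = t\<^sup>2"
    using cube_root_facts[OF assms(1)] by (simp_all add: t_def)
  have s: "0 < 1 + t + t\<^sup>2"
    using t(1) by (simp add: add_pos_nonneg)
  have y: "y * y = 1 / (1 + t + t\<^sup>2)"
    using s by (simp add: y_def t_def[symmetric] t(3) power_divide flip: power2_eq_square)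
  have "i = 0 \<or> i = 1 \<or> i = 2" "j = 0 \<or> j = 1 \<or> j = 2"
    using assms(2,3) by auto
  then have "[y / t, y, t * y] ! i * A6 K i j * [y / t, y, t * y] ! j
      = y * y * [[t, t\<^sup>2, 1], [t\<^sup>2, 1, t], [1, t, t\<^sup>2]] ! i ! j"
    using t(1) by (auto simp: A6_def field_simps power2_eq_square power3_eq_cube simp flip: t(2))
  then show ?thesis
    using assms(2,3) unfolding sinkhorn_eq t_def[symmetric] y by simp
qed

lemma sinkhorn_A6_circulant:
  assumes "0 < K" "K \<noteq> 1" "i < 3" "j < 3"
  defines "a \<equiv> (K powr (2/3) - K powr (1/3)) / (K - 1)"
    and "b \<equiv> (K - K powr (2/3)) / (K - 1)"
    and "c \<equiv> (K powr (1/3) - 1) / (K - 1)"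
  shows "sinkhorn 3 (A6 K) i j = [[a, b, c], [b, c, a], [c, a, b]] ! i ! j"
  using assms(3,4) sinkhorn_A6[OF assms(1,3,4)] cube_root_quotients[OF assms(1,2)]
  by (auto simp: a_def b_def c_def less_Suc_eq numeral_3_eq_3)

lemma alt_min_A6_tendsto_cube_root:
  assumes "0 < K" "K \<noteq> 1" "(i, j) \<in> {(0, 2), (1, 1), (2, 0)}"
  shows "(\<lambda>l. (K - 1) * alt_min 3 (A6 K) l i j + 1) \<longlonglongrightarrow> K powr (1/3)"
proof -
  have ij: "i < 3" "j < 3"
    using assms(3) by auto
  have "(\<lambda>l. alt_min 3 (A6 K) l i j) \<longlonglongrightarrow> sinkhorn 3 (A6 K) i j"
    using symmetric_scaling.alt_min_tendsto_sinkhorn[OF A6_symmetric_scaling[OF assms(1)] ij] .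
  moreover have "sinkhorn 3 (A6 K) i j = (K powr (1/3) - 1) / (K - 1)"
    using sinkhorn_A6_circulant[OF assms(1,2) ij] assms(3) by auto
  ultimately have "(\<lambda>l. alt_min 3 (A6 K) l i j) \<longlonglongrightarrow> (K powr (1/3) - 1) / (K - 1)"
    by simp
  then have "(\<lambda>l. (K - 1) * alt_min 3 (A6 K) l i j + 1) \<longlonglongrightarrow>
      (K - 1) * ((K powr (1/3) - 1) / (K - 1)) + 1"
    by (intro tendsto_intros)
  then show ?thesis
    using assms(2) by simp
qed

lemma sinkhorn_A6_tendsto_at_top:
  assumes "i < 3" "j < 3"
  shows "((\<lambda>L. sinkhorn 3 (A6 L) i j) \<longlongrightarrow> [[0, 1, 0], [1, 0, 0], [0, 0, 1::real]] ! i ! j) at_top"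
proof -
  define t where "t L = L powr (1/3)" for L :: real
  define S where "S = (\<lambda>L. [[t L, (t L)\<^sup>2, 1], [(t L)\<^sup>2, 1, t L], [1, t L, (t L)\<^sup>2]] ! i ! j
    / (1 + t L + (t L)\<^sup>2))"
  have "eventually (\<lambda>L. sinkhorn 3 (A6 L) i j = S L) at_top"
    using eventually_gt_at_top[of 0]
    by eventually_elim (simp add: sinkhorn_A6 assms S_def t_def)
  moreover have "((\<lambda>L. t L / (1 + t L + (t L)\<^sup>2)) \<longlongrightarrow> 0) at_top"
    "((\<lambda>L. (t L)\<^sup>2 / (1 + t L + (t L)\<^sup>2)) \<longlongrightarrow> 1) at_top"
    "((\<lambda>L. 1 / (1 + t L + (t L)\<^sup>2)) \<longlongrightarrow> 0) at_top"
    unfolding t_def by real_asymp+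
  then have "(S \<longlongrightarrow> [[0, 1, 0], [1, 0, 0], [0, 0, 1::real]] ! i ! j) at_top"
    using assms by (auto simp: S_def less_Suc_eq numeral_3_eq_3)
  ultimately show ?thesis
    by (simp add: tendsto_cong)
qed

theorem mainTheorem11:
  fixes K :: real
  assumes "K > 0" and "K \<noteq> 1"
  defines "y \<equiv> 1 / sqrt (1 + K powr (1/3) + K powr (2/3))"
  defines "x \<equiv> y / K powr (1/3)"
  defines "z \<equiv> K powr (1/3) * y"
  defines "a \<equiv> (K powr (2/3) - K powr (1/3)) / (K - 1)"
  defines "b \<equiv> (K - K powr (2/3)) / (K - 1)"
  defines "c \<equiv> (K powr (1/3) - 1) / (K - 1)"
  shows
    "(\<forall>i<3. \<forall>j<3. sinkhorn 3 (A6 K) i j = [x, y, z] ! i * A6 K i j * [x, y, z] ! j)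
     \<and> (\<forall>i<3. \<forall>j<3. sinkhorn 3 (A6 K) i j = [[a, b, c], [b, c, a], [c, a, b]] ! i ! j)
     \<and> ((\<lambda>l. (K - 1) * alt_min 3 (A6 K) l 0 2 + 1) \<longlonglongrightarrow> K powr (1/3))
     \<and> ((\<lambda>l. (K - 1) * alt_min 3 (A6 K) l 1 1 + 1) \<longlonglongrightarrow> K powr (1/3))
     \<and> ((\<lambda>l. (K - 1) * alt_min 3 (A6 K) l 2 0 + 1) \<longlonglongrightarrow> K powr (1/3))
     \<and> (K \<in> \<rat> \<longrightarrow> (\<forall>l. \<forall>i<3. \<forall>j<3. alt_min 3 (A6 K) l i j \<in> \<rat>))
     \<and> (\<forall>i<3. \<forall>j<3. ((\<lambda>L. sinkhorn 3 (A6 L) i j) \<longlongrightarrow>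
            [[0, 1, 0], [1, 0, 0], [0, 0, 1::real]] ! i ! j) at_top)"
proof -
  interpret symmetric_scaling 3 "A6 K" "\<lambda>i. [x, y, z] ! i"
    using A6_symmetric_scaling[OF assms(1)] by (simp add: x_def y_def z_def)
  have "\<forall>i<3. \<forall>j<3. sinkhorn 3 (A6 K) i j = [x, y, z] ! i * A6 K i j * [x, y, z] ! j"
    by (simp add: sinkhorn_eq)
  moreover have "\<forall>i<3. \<forall>j<3. sinkhorn 3 (A6 K) i j = [[a, b, c], [b, c, a], [c, a, b]] ! i ! j"
    using sinkhorn_A6_circulant[OF assms(1,2)] by (simp add: a_def b_def c_def)
  moreover have "K \<in> \<rat> \<Longrightarrow> alt_min 3 (A6 K) l i j \<in> \<rat>" for l i j
    by (intro alt_min_Rats A6_Rats)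
  ultimately show ?thesis
    using alt_min_A6_tendsto_cube_root[OF assms(1,2)] sinkhorn_A6_tendsto_at_top by simp
qed

end
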